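(* Let $d\ge3$ and $\beta>0$ with $\mu(\beta)<1/\rho_d$. There exists a nondecreasing continuous function $C:[0,\infty)\to(0,\infty)$, depending only on $\beta,d,\sigma,g$, such that for all integers $1\le s<t$, all $x\in\mathbb{Z}^d$ and all $\varepsilon\in(0,1)$, almost surely \[ |\mathbb{E}'(W_\varepsilon(s,t,x))-G_\varepsilon(s,x)|\le C(\Sigma)\,\varepsilon(t-s), \] where $\Sigma=\varepsilon|x|+\varepsilon(t-s)+\varepsilon\sqrt t+\varepsilon^2t$.
   Context: $\xi=(\xi_{u,y})_{u\in\mathbb{Z}_{\ge1},y\in\mathbb{Z}^d}$ are i.i.d. with common law $\sigma$, the push-forward of the standard Gaussian measure under some Lipschitz map; $m(\beta)=\mathbb{E}(e^{\beta\xi_{u,y}})$, $\mu(\beta)=m(2\beta)/m(\beta)^2$, $\rho_d$ the return probability of simple symmetric random walk on $\mathbb{Z}^d$. $g:\mathbb{R}^d\to\mathbb{R}$ is Lipschitz, $g_\varepsilon(x)=g(\varepsilon x)$. For integers $0\le s<t$ and $x\in\mathbb{Z}^d$, $\mathcal{Q}(s,t,x)$ is the set of nearest-neighbour paths $(q_s,\dots,q_t)$ in $\mathbb{Z}^d$ with $q_t=x$, and $\mathcal{Q}(t,x)=\mathcal{Q}(0,t,x)$. $Y(s,t,x)=(2d)^{-(t-s)}\sum_{q\in\mathcal{Q}(s,t,x)}\exp(\beta\sum_{i=s+1}^t\xi_{i,q_i})/m(\beta)^{t-s}$; $Z_\varepsilon(t,x)=(2d)^{-t}\sum_{q\in\mathcal{Q}(t,x)}e^{\beta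 g_\varepsilon(q_0)}\exp(\beta\sum_{i=1}^t\xi_{i,q_i})/m(\beta)^t$; $W_\varepsilon(s,t,x)=Z_\varepsilon(t,x)/Y(s,t,x)$. $G_\varepsilon(s,x)=\mathbb{E}(e^{\beta g_\varepsilon(S_s+x)})$ with $\{S_n\}$ simple symmetric random walk on $\mathbb{Z}^d$ from the origin. $\mathbb{E}'$ denotes conditional expectation given the $\sigma$-algebra generated by $\{\xi_{u,y}:s+1\le u\le t,\ y\in\mathbb{Z}^d\}$. *)

theory Defs
  imports "HOL-Probability.Probability"
begin

definition nbr :: "int^'d \<Rightarrow> int^'d \<Rightarrow> bool" where
  "nbr a b \<longleftrightarrow> (\<exists>k. b = a + axis k 1 \<or> b = a - axis k 1)"

text \<open>Q(s,t,x): nearest-neighbour paths (q_s,...,q_t) with q_t = x,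
  represented extensionally (q i = 0 outside [s,t]).\<close>
definition paths :: "nat \<Rightarrow> nat \<Rightarrow> int^'d \<Rightarrow> (nat \<Rightarrow> int^'d) set" where
  "paths s t x = {q. (\<forall>i. i < s \<or> t < i \<longrightarrow> q i = 0)
                   \<and> (\<forall>i. s \<le> i \<and> i < t \<longrightarrow> nbr (q i) (q (Suc i))) \<and> q t = x}"

definition walks0 :: "nat \<Rightarrow> (nat \<Rightarrow> int^'d) set" where
  "walks0 n = {q. q 0 = 0 \<and> (\<forall>i. n < i \<longrightarrow> q i = 0)
                  \<and> (\<forall>i. i < n \<longrightarrow> nbr (q i) (q (Suc i)))}"

text \<open>Return probability of simple symmetric random walk: sum over n \<ge> 1 of the
  probability (2d)^(-n) * #(paths) of first return to 0 at time n.\<close>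
definition rho :: "'d::finite itself \<Rightarrow> real" where
  "rho _ = (\<Sum>n. real (card {q :: nat \<Rightarrow> int^'d. q \<in> walks0 (Suc n) \<and> q (Suc n) = 0
                  \<and> (\<forall>k. 0 < k \<and> k < Suc n \<longrightarrow> q k \<noteq> 0)})
             / (2 * real CARD('d)) ^ Suc n)"

text \<open>Standard Gaussian measure and sigma = push-forward under phi.\<close>
definition std_gauss :: "real measure" where
  "std_gauss = density lborel std_normal_density"

definition mgf :: "(real \<Rightarrow> real) \<Rightarrow> real \<Rightarrow> real" where
  "mgf \<phi> \<beta> = (\<integral>z. exp (\<beta> * \<phi> z) \<partial>std_gauss)"

definition mu :: "(real \<Rightarrow> real) \<Rightarrow> real \<Rightarrow> real" where
  "mu \<phi> \<beta> = mgf \<phi> (2 * \<beta>) / (mgf \<phi> \<beta>)\<^sup>2"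

definition iid_field :: "'a measure \<Rightarrow> (real \<Rightarrow> real) \<Rightarrow> (nat \<Rightarrow> int^'d \<Rightarrow> 'a \<Rightarrow> real) \<Rightarrow> bool" where
  "iid_field M \<phi> \<xi> \<longleftrightarrow> prob_space M
     \<and> prob_space.indep_vars M (\<lambda>_. borel) (\<lambda>(u, y). \<xi> u y) ({1..} \<times> UNIV)
     \<and> (\<forall>u\<ge>1. \<forall>y. distr M borel (\<xi> u y) = distr std_gauss borel \<phi>)"

definition rvec :: "int^'d \<Rightarrow> real^'d" where
  "rvec x = (\<chi> i. real_of_int (x $ i))"

definition Yfun :: "(real \<Rightarrow> real) \<Rightarrow> real \<Rightarrow> (nat \<Rightarrow> int^'d \<Rightarrow> 'a \<Rightarrow> real)
     \<Rightarrow> nat \<Rightarrow> nat \<Rightarrow> int^'d \<Rightarrow> 'a \<Rightarrow> real" where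
  "Yfun \<phi> \<beta> \<xi> s t x \<omega> = (\<Sum>q\<in>paths s t x. exp (\<beta> * (\<Sum>i\<in>{Suc s..t}. \<xi> i (q i) \<omega>)))
       / ((2 * real CARD('d)) ^ (t - s) * mgf \<phi> \<beta> ^ (t - s))"

definition Zfun :: "(real \<Rightarrow> real) \<Rightarrow> real \<Rightarrow> (real^'d \<Rightarrow> real) \<Rightarrow> real
     \<Rightarrow> (nat \<Rightarrow> int^'d \<Rightarrow> 'a \<Rightarrow> real) \<Rightarrow> nat \<Rightarrow> int^'d \<Rightarrow> 'a \<Rightarrow> real" where
  "Zfun \<phi> \<beta> g \<epsilon> \<xi> t x \<omega> = (\<Sum>q\<in>paths 0 t x. exp (\<beta> * g (\<epsilon> *\<^sub>R rvec (q 0)))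
          * exp (\<beta> * (\<Sum>i\<in>{1..t}. \<xi> i (q i) \<omega>)))
       / ((2 * real CARD('d)) ^ t * mgf \<phi> \<beta> ^ t)"

definition Wfun :: "(real \<Rightarrow> real) \<Rightarrow> real \<Rightarrow> (real^'d \<Rightarrow> real) \<Rightarrow> real
     \<Rightarrow> (nat \<Rightarrow> int^'d \<Rightarrow> 'a \<Rightarrow> real) \<Rightarrow> nat \<Rightarrow> nat \<Rightarrow> int^'d \<Rightarrow> 'a \<Rightarrow> real" where
  "Wfun \<phi> \<beta> g \<epsilon> \<xi> s t x \<omega> = Zfun \<phi> \<beta> g \<epsilon> \<xi> t x \<omega> / Yfun \<phi> \<beta> \<xi> s t x \<omega>"

definition Gfun :: "real \<Rightarrow> (real^'d \<Rightarrow> real) \<Rightarrow> real \<Rightarrow> nat \<Rightarrow> int^'d \<Rightarrow> real" where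
  "Gfun \<beta> g \<epsilon> s x = (\<Sum>q\<in>walks0 s. exp (\<beta> * g (\<epsilon> *\<^sub>R rvec (q s + x))))
       / (2 * real CARD('d)) ^ s"

definition Fsig :: "'a measure \<Rightarrow> (nat \<Rightarrow> int^'d \<Rightarrow> 'a \<Rightarrow> real) \<Rightarrow> nat \<Rightarrow> nat \<Rightarrow> 'a measure" where
  "Fsig M \<xi> s t = sigma (space M)
     {\<xi> u y -` A \<inter> space M | u y A. Suc s \<le> u \<and> u \<le> t \<and> A \<in> sets borel}"

end

theory Submission
  imports Defs "HOL-Probability.Hoeffding"
begin

text \<open>Cutting the paths of \<open>Q(t,x)\<close> at time \<open>s\<close> writes \<open>Z(t,x)\<close>, up to normalisation, as
  a sum over \<open>r \<in> Q(s,t,x)\<close> of the Boltzmann weight of \<open>r\<close> between \<open>s\<close> and \<open>t\<close> times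
  \<open>Z(s,r\<^sub>s)\<close>. Hence \<open>W(s,t,x)\<close> is the average of \<open>Z(s,r\<^sub>s)\<close> under the polymer measure on
  \<open>Q(s,t,x)\<close>, which depends only on the environment after time \<open>s\<close>, whereas each \<open>Z(s,y)\<close> is
  independent of that environment and has mean \<open>G(s,y)\<close>. So \<open>E'(W)\<close> is an average of the
  values \<open>G(s,r\<^sub>s)\<close> with \<open>|r\<^sub>s - x| \<le> t - s\<close>. Since \<open>g\<close> is Lipschitz, \<open>|G(s,y) - G(s,x)|\<close>
  is controlled by an exponential moment \<open>E exp(\<lambda>|S\<^sub>s|)\<close> of the walk, and Hoeffding's lemma
  applied to each coordinate bounds it by \<open>2d exp((d\<lambda>)\<^sup>2 s / 2)\<close>.\<close>

section \<open>Nearest-neighbour walks and paths\<close>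

definition unit_steps :: "(int^'d) set" where
  "unit_steps = range (\<lambda>k. axis k 1) \<union> range (\<lambda>k. - axis k 1)"

lemma nbr_iff_unit_step: "nbr a b \<longleftrightarrow> b - a \<in> unit_steps"
  unfolding nbr_def unit_steps_def by (auto simp: algebra_simps)

lemma finite_unit_steps: "finite (unit_steps :: (int^'d::finite) set)"
  unfolding unit_steps_def by auto

lemma nbr_commute: "nbr a b \<longleftrightarrow> nbr b a"
  unfolding nbr_def by (auto simp: algebra_simps)

lemma nbr_translate: "nbr (a + c) (b + c) \<longleftrightarrow> nbr a b" "nbr (a - c) (b - c) \<longleftrightarrow> nbr a b"
  unfolding nbr_iff_unit_step by (simp_all add: algebra_simps)

lemma sum_unit_steps:
  "(\<Sum>e\<in>(unit_steps :: (int^'d::finite) set). h e) = (\<Sum>k\<in>UNIV. h (axis k 1)) + (\<Sum>k\<in>UNIV. h (- axis k 1))"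
proof -
  have inj_pos: "inj (\<lambda>k::'d. axis k (1::int))" and inj_neg: "inj (\<lambda>k::'d. - axis k (1::int))"
    by (auto intro!: injI simp: axis_eq_axis)
  have "axis k (1::int) \<noteq> - axis j 1" for k j :: 'd
  proof
    assume "axis k (1::int) = - axis j 1"
    then have "axis k (1::int) $ k = (- axis j 1) $ k" by simp
    then show False by (auto simp: axis_def split: if_splits)
  qed
  then have "range (\<lambda>k::'d. axis k (1::int)) \<inter> range (\<lambda>k. - axis k 1) = {}" by auto
  then show ?thesis unfolding unit_steps_def
    by (subst sum.union_disjoint) (auto simp: sum.reindex inj_pos inj_neg)
qed

lemma sum_unit_steps_exp_component:
  "(\<Sum>e\<in>(unit_steps :: (int^'d::finite) set). exp (\<mu> * real_of_int (e $ j)))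
     = 2 * (real CARD('d) - 1) + exp \<mu> + exp (-\<mu>)"
proof -
  have "(\<Sum>k\<in>(UNIV::'d set). exp (c * real_of_int (axis k (1::int) $ j))) = real CARD('d) - 1 + exp c" for c
  proof -
    have "(\<Sum>k\<in>(UNIV::'d set). exp (c * real_of_int (axis k (1::int) $ j)))
        = (\<Sum>k\<in>(UNIV::'d set). 1 + (if k = j then exp c - 1 else 0))"
      by (intro sum.cong) (auto simp: axis_def)
    then show ?thesis by (simp add: sum.distrib)
  qed
  from this[of \<mu>] this[of "-\<mu>"] show ?thesis by (simp add: sum_unit_steps)
qed

lemma walks0_0: "walks0 0 = {\<lambda>_. 0}"
  unfolding walks0_def by (auto simp: fun_eq_iff) (metis neq0_conv)

lemma walks0_Suc:
  "walks0 (Suc n) = (\<lambda>(w, e). w(Suc n := w n + e)) ` (walks0 n \<times> (unit_steps :: (int^'d::finite) set))"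
proof (intro set_eqI iffI)
  fix q assume q: "q \<in> walks0 (Suc n)"
  have "q(Suc n := 0) \<in> walks0 n" "q (Suc n) - q n \<in> unit_steps"
    using q unfolding walks0_def by (auto simp: less_Suc_eq nbr_iff_unit_step)
  moreover have "q = (\<lambda>(w, e). w(Suc n := w n + e)) (q(Suc n := 0), q (Suc n) - q n)"
    by (auto simp: fun_eq_iff)
  ultimately show "q \<in> (\<lambda>(w, e). w(Suc n := w n + e)) ` (walks0 n \<times> unit_steps)"
    by blast
next
  fix q assume "q \<in> (\<lambda>(w, e). w(Suc n := w n + e)) ` (walks0 n \<times> unit_steps)"
  then obtain w e where "q = w(Suc n := w n + e)" "w \<in> walks0 n" "e \<in> unit_steps" by auto
  then show "q \<in> walks0 (Suc n)"
    unfolding walks0_def by (auto simp: less_Suc_eq nbr_iff_unit_step)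
qed

lemma inj_on_walks0_extend:
  "inj_on (\<lambda>(w, e). w(Suc n := w n + e)) (walks0 n \<times> (unit_steps :: (int^'d::finite) set))"
proof (rule inj_onI, clarify)
  fix w e w' e'
  assume w: "w \<in> walks0 n" and w': "w' \<in> walks0 n"
    and eq: "w(Suc n := w n + e) = w'(Suc n := w' n + e')"
  have "w (Suc n) = 0" "w' (Suc n) = 0" using w w' unfolding walks0_def by auto
  moreover have "w i = w' i" if "i \<noteq> Suc n" for i
    using fun_cong[OF eq, of i] that by simp
  ultimately have "w = w'" by (metis ext)
  then show "w = w' \<and> e = e'" using fun_cong[OF eq, of "Suc n"] by simp
qed

lemma finite_walks0: "finite (walks0 n :: (nat \<Rightarrow> int^'d::finite) set)"
  by (induction n) (auto simp: walks0_0 walks0_Suc finite_unit_steps)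

lemma walks0_nonempty: "walks0 n \<noteq> ({} :: (nat \<Rightarrow> int^'d::finite) set)"
proof -
  fix k :: 'd
  have "(\<lambda>i. if i \<le> n \<and> odd i then axis k 1 else 0) \<in> walks0 n"
    unfolding walks0_def nbr_def by (auto intro!: exI[of _ k])
  then show ?thesis by blast
qed

lemma sum_walks0_Suc:
  "(\<Sum>w\<in>walks0 (Suc n). F w) = (\<Sum>w\<in>walks0 n. \<Sum>e\<in>unit_steps. F (w(Suc n := w n + e)))"
  unfolding walks0_Suc
  by (subst sum.reindex[OF inj_on_walks0_extend]) (simp add: sum.cartesian_product split_def)

lemma sum_walks0_exp_component:
  "(\<Sum>w\<in>(walks0 n :: (nat \<Rightarrow> int^'d::finite) set). exp (\<mu> * real_of_int (w n $ j)))
     = (2 * (real CARD('d) - 1) + exp \<mu> + exp (-\<mu>)) ^ n"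
proof (induction n)
  case 0
  then show ?case by (simp add: walks0_0)
next
  case (Suc n)
  have "(\<Sum>w\<in>(walks0 (Suc n) :: (nat \<Rightarrow> int^'d) set). exp (\<mu> * real_of_int (w (Suc n) $ j)))
     = (\<Sum>w\<in>(walks0 n :: (nat \<Rightarrow> int^'d) set). exp (\<mu> * real_of_int (w n $ j))
          * (\<Sum>e\<in>unit_steps. exp (\<mu> * real_of_int (e $ j))))"
    by (simp add: sum_walks0_Suc distrib_left exp_add sum_distrib_left)
  then show ?case
    using Suc by (simp add: sum_unit_steps_exp_component flip: sum_distrib_right)
qed

lemma paths_reverse_bij:
  fixes x :: "int^'d::finite"
  assumes "s \<le> t"
  shows "bij_betw (\<lambda>q i. if i \<le> t - s then q (t - i) - x else 0) (paths s t x) (walks0 (t - s))"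
proof (rule bij_betw_byWitness[where f'="\<lambda>w i. if s \<le> i \<and> i \<le> t then w (t - i) + x else 0"])
  show "\<forall>q\<in>paths s t x. (\<lambda>i. if s \<le> i \<and> i \<le> t then (if t - i \<le> t - s then q (t - (t - i)) - x else 0) + x else 0) = q"
    using assms by (auto simp: paths_def fun_eq_iff)
  show "\<forall>w\<in>walks0 (t - s). (\<lambda>i. if i \<le> t - s then (if s \<le> t - i \<and> t - i \<le> t then w (t - (t - i)) + x else 0) - x else 0) = w"
    using assms by (auto simp: walks0_def fun_eq_iff)
  show "(\<lambda>q i. if i \<le> t - s then q (t - i) - x else 0) ` paths s t x \<subseteq> walks0 (t - s)"
  proof clarify
    fix q assume q: "q \<in> paths s t x"
    have "nbr (q (t - i) - x) (q (t - Suc i) - x)" if "i < t - s" for i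
    proof -
      have "nbr (q (t - Suc i)) (q (Suc (t - Suc i)))" using q that unfolding paths_def by auto
      moreover have "Suc (t - Suc i) = t - i" using that by simp
      ultimately show ?thesis by (simp add: nbr_translate nbr_commute)
    qed
    then show "(\<lambda>i. if i \<le> t - s then q (t - i) - x else 0) \<in> walks0 (t - s)"
      using q unfolding walks0_def paths_def by auto
  qed
  show "(\<lambda>w i. if s \<le> i \<and> i \<le> t then w (t - i) + x else 0) ` walks0 (t - s) \<subseteq> paths s t x"
  proof clarify
    fix w :: "nat \<Rightarrow> int^'d" assume w: "w \<in> walks0 (t - s)"
    have "nbr (w (t - i) + x) (w (t - Suc i) + x)" if "s \<le> i" "i < t" for i
    proof -
      have "nbr (w (t - Suc i)) (w (Suc (t - Suc i)))" using w that unfolding walks0_def by auto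
      moreover have "Suc (t - Suc i) = t - i" using that by simp
      ultimately show ?thesis by (simp add: nbr_translate nbr_commute)
    qed
    then show "(\<lambda>i. if s \<le> i \<and> i \<le> t then w (t - i) + x else 0) \<in> paths s t x"
      using w assms unfolding walks0_def paths_def by auto
  qed
qed

lemma finite_paths: "s \<le> t \<Longrightarrow> finite (paths s t (x::int^'d::finite))"
  using bij_betw_finite[OF paths_reverse_bij] finite_walks0 by blast

lemma paths_nonempty: "s \<le> t \<Longrightarrow> paths s t (x::int^'d::finite) \<noteq> {}"
  using bij_betw_imp_surj_on[OF paths_reverse_bij, of s t x] walks0_nonempty[of "t - s"] by auto

lemma sum_paths_start:
  "(\<Sum>q\<in>paths 0 s (y::int^'d::finite). f (q 0)) = (\<Sum>w\<in>walks0 s. f (w s + y))"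
  using sum.reindex_bij_betw[OF paths_reverse_bij[of 0 s y], of "\<lambda>w. f (w s + y)"] by simp

lemma rvec_add: "rvec (a + b) = rvec a + rvec b"
  by (simp add: rvec_def vec_eq_iff)

lemma rvec_diff: "rvec (a - b) = rvec a - rvec b"
  by (simp add: rvec_def vec_eq_iff)

lemma norm_rvec_unit_step: "e \<in> unit_steps \<Longrightarrow> norm (rvec e) = 1"
proof -
  have "rvec (axis k (1::int)) = axis k 1" "rvec (- axis k (1::int)) = - axis k 1" for k :: 'a
    by (simp_all add: rvec_def vec_eq_iff axis_def)
  then show "e \<in> unit_steps \<Longrightarrow> norm (rvec e) = 1" unfolding unit_steps_def by auto
qed

lemma norm_walks0_le: "w \<in> walks0 n \<Longrightarrow> i \<le> n \<Longrightarrow> norm (rvec (w i)) \<le> real i"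
proof (induction i)
  case 0
  then show ?case by (simp add: walks0_def rvec_def vec_eq_iff)
next
  case (Suc i)
  then have "w (Suc i) - w i \<in> unit_steps" by (simp add: walks0_def nbr_iff_unit_step)
  then have "norm (rvec (w (Suc i)) - rvec (w i)) = 1" by (metis norm_rvec_unit_step rvec_diff)
  with Suc norm_triangle_ineq2[of "rvec (w (Suc i))" "rvec (w i)"] show ?case by simp
qed

lemma norm_paths_start_le:
  assumes "s \<le> t" "r \<in> paths s t x"
  shows "norm (rvec (r s) - rvec x) \<le> real (t - s)"
proof -
  have "(\<lambda>i. if i \<le> t - s then r (t - i) - x else 0) \<in> walks0 (t - s)"
    using bij_betw_imp_surj_on[OF paths_reverse_bij[OF assms(1)]] assms(2) by blast
  from norm_walks0_le[OF this, of "t - s"] assms(1) show ?thesis by (simp add: rvec_diff)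
qed

lemma paths_split_bij:
  fixes x :: "int^'d::finite"
  assumes "s \<le> t"
  shows "bij_betw (\<lambda>q. (\<lambda>i. if s \<le> i \<and> i \<le> t then q i else 0, \<lambda>i. if i \<le> s then q i else 0))
     (paths 0 t x) (SIGMA r:paths s t x. paths 0 s (r s))"
proof (rule bij_betw_byWitness[where f'="\<lambda>(r, p) i. if i \<le> s then p i else r i"])
  show "(\<lambda>(r, p) i. if i \<le> s then p i else r i) ` (SIGMA r:paths s t x. paths 0 s (r s)) \<subseteq> paths 0 t x"
  proof clarify
    fix r p assume "r \<in> paths s t x" "p \<in> paths 0 s (r s)"
    then show "(\<lambda>i. if i \<le> s then p i else r i) \<in> paths 0 t x"
      using assms unfolding paths_def
      by (auto simp: not_le) (metis le_less_Suc_eq less_eq_Suc_le not_less_eq_eq)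
  qed
qed (use assms in \<open>auto simp: paths_def fun_eq_iff\<close>)

lemma sum_paths_split:
  fixes x :: "int^'d::finite" and f :: "nat \<Rightarrow> int^'d \<Rightarrow> real"
  assumes st: "s \<le> t"
  shows "(\<Sum>q\<in>paths 0 t x. c (q 0) * exp (\<beta> * (\<Sum>i\<in>{1..t}. f i (q i))))
    = (\<Sum>r\<in>paths s t x. exp (\<beta> * (\<Sum>i\<in>{Suc s..t}. f i (r i))) *
         (\<Sum>p\<in>paths 0 s (r s). c (p 0) * exp (\<beta> * (\<Sum>i\<in>{1..s}. f i (p i)))))"
proof -
  define H where "H = (\<lambda>(r::nat \<Rightarrow> int^'d, p::nat \<Rightarrow> int^'d). exp (\<beta> * (\<Sum>i\<in>{Suc s..t}. f i (r i))) *
         (c (p 0) * exp (\<beta> * (\<Sum>i\<in>{1..s}. f i (p i)))))"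
  define split where "split = (\<lambda>q::nat \<Rightarrow> int^'d.
    (\<lambda>i. if s \<le> i \<and> i \<le> t then q i else 0, \<lambda>i. if i \<le> s then q i else 0))"
  have "H (split q) = c (q 0) * exp (\<beta> * (\<Sum>i\<in>{1..t}. f i (q i)))" for q
  proof -
    have "{1..t} = {1..s} \<union> {Suc s..t}" using st by auto
    then have "(\<Sum>i\<in>{1..t}. f i (q i)) = (\<Sum>i\<in>{1..s}. f i (q i)) + (\<Sum>i\<in>{Suc s..t}. f i (q i))"
      by (simp add: sum.union_disjoint)
    moreover have "(\<Sum>i\<in>{Suc s..t}. f i (if s \<le> i \<and> i \<le> t then q i else 0)) = (\<Sum>i\<in>{Suc s..t}. f i (q i))"
      "(\<Sum>i\<in>{1..s}. f i (if i \<le> s then q i else 0)) = (\<Sum>i\<in>{1..s}. f i (q i))"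
      by (auto intro: sum.cong)
    ultimately show ?thesis
      unfolding H_def split_def by (simp add: distrib_left exp_add mult_ac)
  qed
  then have "(\<Sum>q\<in>paths 0 t x. c (q 0) * exp (\<beta> * (\<Sum>i\<in>{1..t}. f i (q i))))
      = (\<Sum>z\<in>(SIGMA r:paths s t x. paths 0 s (r s)). H z)"
    using sum.reindex_bij_betw[OF paths_split_bij[OF st, of x, folded split_def], of H] by simp
  also have "\<dots> = (\<Sum>r\<in>paths s t x. \<Sum>p\<in>paths 0 s (r s). H (r, p))"
    using sum.Sigma[OF finite_paths[OF st], where B="\<lambda>r. paths 0 s (r s)" and g="\<lambda>r p. H (r, p)"]
    by (simp add: finite_paths case_prod_eta)
  finally show ?thesis
    unfolding H_def by (simp add: sum_distrib_left)
qed

section \<open>Exponential moments of the walk and regularity of \<open>G\<close>\<close>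

text \<open>Hoeffding's lemma for a fair \<open>\<plusminus>1\<close> variable: \<open>cosh \<mu> \<le> exp (\<mu>\<^sup>2 / 2)\<close>.\<close>
lemma exp_add_exp_uminus_le: "exp (\<mu>::real) + exp (-\<mu>) \<le> 2 * exp (\<mu>\<^sup>2 / 2)"
proof -
  define h where "h = 2 * \<bar>\<mu>\<bar>"
  have "- h * (1/2) + ln (1 + (1/2) * (exp h - 1)) \<le> h\<^sup>2 / 8"
    using Hoeffdings_lemma_aux[of h "1/2"] by (simp add: h_def)
  moreover have "1 + (1/2) * (exp h - 1) = (1 + exp h) / 2" by (simp add: field_simps)
  ultimately have "- h * (1/2) + ln ((1 + exp h) / 2) \<le> h\<^sup>2 / 8" by metis
  moreover have "h\<^sup>2 = 4 * \<mu>\<^sup>2" "h * (1/2) = \<bar>\<mu>\<bar>" by (simp_all add: h_def power_mult_distrib)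
  ultimately have "ln ((1 + exp h) / 2) \<le> \<bar>\<mu>\<bar> + \<mu>\<^sup>2 / 2"
    by linarith
  then have "(1 + exp h) / 2 \<le> exp (\<bar>\<mu>\<bar> + \<mu>\<^sup>2 / 2)"
    by (metis exp_le_cancel_iff exp_ln add_pos_nonneg divide_pos_pos exp_ge_zero zero_less_one zero_less_numeral)
  then have "(1 + exp h) / 2 * exp (-\<bar>\<mu>\<bar>) \<le> exp (\<bar>\<mu>\<bar> + \<mu>\<^sup>2 / 2) * exp (-\<bar>\<mu>\<bar>)"
    by (simp add: mult_right_mono)
  also have "\<dots> = exp (\<mu>\<^sup>2 / 2)" by (simp flip: exp_add)
  finally have "(1 + exp h) / 2 * exp (-\<bar>\<mu>\<bar>) \<le> exp (\<mu>\<^sup>2 / 2)" .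
  moreover have "(1 + exp h) / 2 * exp (-\<bar>\<mu>\<bar>) = (exp (-\<bar>\<mu>\<bar>) + exp \<bar>\<mu>\<bar>) / 2"
    by (simp add: h_def field_simps flip: exp_add)
  ultimately show ?thesis by (cases "\<mu> \<ge> 0") auto
qed

lemma unit_step_mgf_le:
  "2 * (real CARD('d::finite) - 1) + exp \<mu> + exp (-\<mu>) \<le> 2 * real CARD('d) * exp (\<mu>\<^sup>2 / 2)"
proof -
  have "2 * (real CARD('d) - 1) * 1 \<le> 2 * (real CARD('d) - 1) * exp (\<mu>\<^sup>2 / 2)"
    by (intro mult_left_mono) (auto simp: Suc_le_eq)
  then show ?thesis using exp_add_exp_uminus_le[of \<mu>] by (simp add: algebra_simps)
qed

text \<open>Bounding the Euclidean norm by \<open>d\<close> times the largest coordinate turns the exponential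
  moment of the norm into a sum of exponential moments of single coordinates.\<close>
lemma exp_mult_norm_le_sum_components:
  fixes v :: "real^'d::finite"
  assumes "0 \<le> a"
  shows "exp (a * norm v)
    \<le> (\<Sum>k\<in>UNIV. exp (real CARD('d) * a * v $ k) + exp (- (real CARD('d) * a) * v $ k))"
proof -
  have "Max (range (\<lambda>k. \<bar>v $ k\<bar>)) \<in> range (\<lambda>k. \<bar>v $ k\<bar>)" by (rule Max_in) auto
  then obtain k0 where "\<bar>v $ k0\<bar> = Max (range (\<lambda>k. \<bar>v $ k\<bar>))" by (metis (mono_tags) rangeE)
  then have k0: "\<bar>v $ k\<bar> \<le> \<bar>v $ k0\<bar>" for k by simp
  have "norm v \<le> (\<Sum>k\<in>UNIV. \<bar>v $ k\<bar>)" by (rule norm_le_l1_cart)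
  also have "\<dots> \<le> (\<Sum>k\<in>(UNIV::'d set). \<bar>v $ k0\<bar>)" by (intro sum_mono k0)
  also have "\<dots> = real CARD('d) * \<bar>v $ k0\<bar>" by simp
  finally have "exp (a * norm v) \<le> exp (a * (real CARD('d) * \<bar>v $ k0\<bar>))"
    using assms by (simp add: mult_left_mono)
  also have "\<dots> \<le> exp (real CARD('d) * a * v $ k0) + exp (- (real CARD('d) * a) * v $ k0)"
    by (cases "v $ k0 \<ge> 0") (auto simp: algebra_simps)
  also have "\<dots> \<le> (\<Sum>k\<in>UNIV. exp (real CARD('d) * a * v $ k) + exp (- (real CARD('d) * a) * v $ k))"
    by (rule member_le_sum) (auto intro: add_nonneg_nonneg)
  finally show ?thesis .
qed

lemma sum_walks0_exp_norm_le:
  assumes "0 \<le> a"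
  shows "(\<Sum>w\<in>(walks0 n :: (nat \<Rightarrow> int^'d::finite) set). exp (a * norm (rvec (w n))))
     \<le> 2 * real CARD('d) * (2 * real CARD('d)) ^ n * exp ((real CARD('d) * a)\<^sup>2 * real n / 2)"
proof -
  define c where "c = real CARD('d) * a"
  have "(\<Sum>w\<in>(walks0 n :: (nat \<Rightarrow> int^'d) set). exp (a * norm (rvec (w n))))
     \<le> (\<Sum>w\<in>(walks0 n :: (nat \<Rightarrow> int^'d) set). \<Sum>k\<in>UNIV.
           exp (c * real_of_int (w n $ k)) + exp ((-c) * real_of_int (w n $ k)))"
    by (intro sum_mono)
      (use exp_mult_norm_le_sum_components[OF assms, of "rvec (w n)" for w] in \<open>simp add: c_def rvec_def\<close>)
  also have "\<dots> = (\<Sum>k\<in>(UNIV::'d set). (2 * (real CARD('d) - 1) + exp c + exp (-c)) ^ n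
                 + (2 * (real CARD('d) - 1) + exp (-c) + exp (- (- c))) ^ n)"
    by (subst sum.swap) (simp only: sum.distrib sum_walks0_exp_component)
  also have "\<dots> \<le> (\<Sum>k\<in>(UNIV::'d set). 2 * (2 * real CARD('d) * exp (c\<^sup>2 / 2)) ^ n)"
  proof (intro sum_mono)
    have "(2 * (real CARD('d) - 1) + exp c + exp (-c)) ^ n \<le> (2 * real CARD('d) * exp (c\<^sup>2 / 2)) ^ n"
      by (intro power_mono unit_step_mgf_le) (auto intro: add_nonneg_nonneg)
    then show "(2 * (real CARD('d) - 1) + exp c + exp (-c)) ^ n + (2 * (real CARD('d) - 1) + exp (-c) + exp (- (- c))) ^ n
        \<le> 2 * (2 * real CARD('d) * exp (c\<^sup>2 / 2)) ^ n" for k :: 'd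
      by (simp add: add.commute add.left_commute)
  qed
  also have "\<dots> = 2 * real CARD('d) * (2 * real CARD('d)) ^ n * exp (c\<^sup>2 * real n / 2)"
    by (simp add: power_mult_distrib exp_of_nat_mult[symmetric] algebra_simps)
  finally show ?thesis by (simp add: c_def)
qed

lemma abs_exp_diff_le: "\<bar>exp (a::real) - exp b\<bar> \<le> exp (max a b) * \<bar>a - b\<bar>"
proof -
  have *: "exp v - exp u \<le> exp v * (v - u)" if "u \<le> v" for u v :: real
  proof -
    have "exp v * (1 + (u - v)) \<le> exp v * exp (u - v)" by (simp add: exp_ge_add_one_self)
    then show ?thesis by (simp add: algebra_simps flip: exp_add)
  qed
  show ?thesis using *[of a b] *[of b a] by (cases "a \<le> b") (auto simp: max_def abs_if)
qed

lemma abs_exp_lipschitz_diff_le: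
  fixes g :: "'a::real_normed_vector \<Rightarrow> real"
  assumes lip: "L-lipschitz_on UNIV g" and "0 \<le> \<beta>"
    and "norm u \<le> R" "norm v \<le> R" "dist u v \<le> \<delta>"
  shows "\<bar>exp (\<beta> * g u) - exp (\<beta> * g v)\<bar> \<le> \<beta> * L * \<delta> * exp (\<beta> * (\<bar>g 0\<bar> + L * R))"
proof -
  have L: "0 \<le> L" using lipschitz_on_nonneg[OF lip] .
  have "\<beta> * g z \<le> \<beta> * (\<bar>g 0\<bar> + L * R)" if "norm z \<le> R" for z
  proof -
    have "g z \<le> \<bar>g 0\<bar> + L * norm z"
      using lipschitz_onD[OF lip, of z 0] by (simp add: dist_norm dist_real_def)
    also have "\<dots> \<le> \<bar>g 0\<bar> + L * R"
      using that L by (simp add: mult_left_mono)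
    finally show ?thesis using assms(2) by (rule mult_left_mono)
  qed
  then have "exp (max (\<beta> * g u) (\<beta> * g v)) \<le> exp (\<beta> * (\<bar>g 0\<bar> + L * R))"
    using assms(3,4) by simp
  moreover have "\<bar>\<beta> * g u - \<beta> * g v\<bar> \<le> \<beta> * L * \<delta>"
  proof -
    have "\<bar>\<beta> * g u - \<beta> * g v\<bar> \<le> \<beta> * (L * dist u v)"
      using lipschitz_onD[OF lip, of u v] assms(2)
      by (simp add: dist_real_def abs_mult mult_left_mono flip: right_diff_distrib)
    also have "\<dots> \<le> \<beta> * (L * \<delta>)"
      using assms(2,5) L by (intro mult_left_mono) auto
    finally show ?thesis by (simp add: mult.assoc)
  qed
  ultimately have "exp (max (\<beta> * g u) (\<beta> * g v)) * \<bar>\<beta> * g u - \<beta> * g v\<bar> \<le> exp (\<beta> * (\<bar>g 0\<bar> + L * R)) * (\<beta> * L * \<delta>)"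
    by (intro mult_mono) auto
  with abs_exp_diff_le[of "\<beta> * g u" "\<beta> * g v"] show ?thesis
    by (simp add: mult.commute)
qed

lemma abs_exp_translate_diff_le:
  fixes g :: "real^'d::finite \<Rightarrow> real"
  assumes lip: "L-lipschitz_on UNIV g" and "0 \<le> \<beta>" "0 \<le> \<epsilon>" and yx: "norm (rvec y - rvec x) \<le> D"
  shows "\<bar>exp (\<beta> * g (\<epsilon> *\<^sub>R rvec (u + y))) - exp (\<beta> * g (\<epsilon> *\<^sub>R rvec (u + x)))\<bar>
    \<le> \<beta> * L * \<epsilon> * D * exp (\<beta> * \<bar>g 0\<bar>) * exp (\<beta> * L * \<epsilon> * (norm (rvec x) + D))
       * exp (\<beta> * L * \<epsilon> * norm (rvec u))"
proof -
  define R where "R = \<epsilon> * (norm (rvec u) + (norm (rvec x) + D))"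
  have norm_le: "norm (\<epsilon> *\<^sub>R rvec (u + z)) \<le> R" if "norm (rvec z) \<le> norm (rvec x) + D" for z
    unfolding R_def using assms(3) that norm_triangle_ineq[of "rvec u" "rvec z"]
    by (auto simp: rvec_add intro!: mult_left_mono)
  have "norm (rvec y) \<le> norm (rvec x) + D" "norm (rvec x) \<le> norm (rvec x) + D"
    using norm_triangle_ineq2[of "rvec y" "rvec x"] yx order_trans[OF norm_ge_zero yx] by auto
  moreover have "dist (\<epsilon> *\<^sub>R rvec (u + y)) (\<epsilon> *\<^sub>R rvec (u + x)) \<le> \<epsilon> * D"
    using assms(3) yx by (simp add: dist_norm rvec_add mult_left_mono flip: scaleR_diff_right)
  ultimately have "\<bar>exp (\<beta> * g (\<epsilon> *\<^sub>R rvec (u + y))) - exp (\<beta> * g (\<epsilon> *\<^sub>R rvec (u + x)))\<bar>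
      \<le> \<beta> * L * (\<epsilon> * D) * exp (\<beta> * (\<bar>g 0\<bar> + L * R))"
    by (intro abs_exp_lipschitz_diff_le[OF lip assms(2)] norm_le)
  also have "\<dots> = \<beta> * L * \<epsilon> * D * exp (\<beta> * \<bar>g 0\<bar>) * exp (\<beta> * L * \<epsilon> * (norm (rvec x) + D))
       * exp (\<beta> * L * \<epsilon> * norm (rvec u))"
    unfolding R_def by (simp add: algebra_simps flip: exp_add)
  finally show ?thesis .
qed

lemma Gfun_diff_le:
  fixes g :: "real^'d::finite \<Rightarrow> real"
  assumes lip: "L-lipschitz_on UNIV g" and "0 \<le> \<beta>" "0 \<le> \<epsilon>" and yx: "norm (rvec y - rvec x) \<le> D"
  shows "\<bar>Gfun \<beta> g \<epsilon> s y - Gfun \<beta> g \<epsilon> s x\<bar>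
    \<le> 2 * real CARD('d) * \<beta> * L * exp (\<beta> * \<bar>g 0\<bar>)
       * exp (\<beta> * L * \<epsilon> * (norm (rvec x) + D) + (real CARD('d) * \<beta> * L * \<epsilon>)\<^sup>2 * real s / 2) * \<epsilon> * D"
proof -
  have L: "0 \<le> L" using lipschitz_on_nonneg[OF lip] .
  define N :: real where "N = (2 * real CARD('d)) ^ s"
  define K where "K = \<beta> * L * \<epsilon> * D * exp (\<beta> * \<bar>g 0\<bar>) * exp (\<beta> * L * \<epsilon> * (norm (rvec x) + D))"
  have K: "0 \<le> K"
    unfolding K_def using assms L order_trans[OF norm_ge_zero yx] by simp
  have "\<bar>Gfun \<beta> g \<epsilon> s y - Gfun \<beta> g \<epsilon> s x\<bar>
     = \<bar>\<Sum>w\<in>(walks0 s :: (nat \<Rightarrow> int^'d) set).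
          exp (\<beta> * g (\<epsilon> *\<^sub>R rvec (w s + y))) - exp (\<beta> * g (\<epsilon> *\<^sub>R rvec (w s + x)))\<bar> / N"
    unfolding Gfun_def N_def by (simp add: sum_subtractf flip: diff_divide_distrib)
  also have "\<dots> \<le> (\<Sum>w\<in>(walks0 s :: (nat \<Rightarrow> int^'d) set). K * exp (\<beta> * L * \<epsilon> * norm (rvec (w s)))) / N"
    unfolding N_def
    by (intro divide_right_mono order_trans[OF sum_abs sum_mono]) (simp_all add: abs_exp_translate_diff_le[OF assms, folded K_def])
  also have "\<dots> \<le> K * (2 * real CARD('d) * exp ((real CARD('d) * (\<beta> * L * \<epsilon>))\<^sup>2 * real s / 2))"
    using sum_walks0_exp_norm_le[of "\<beta> * L * \<epsilon>" s, where 'd='d] assms L K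
    by (simp add: N_def sum_distrib_left[symmetric] divide_le_eq mult_left_mono mult_ac)
  finally show ?thesis
    unfolding K_def by (simp add: exp_add power_mult_distrib mult_ac)
qed

section \<open>The Gaussian environment\<close>

lemma sets_std_gauss [measurable_cong, simp]: "sets std_gauss = sets borel"
  unfolding std_gauss_def by simp

lemma prob_space_std_gauss: "prob_space std_gauss"
  unfolding std_gauss_def by (rule prob_space_normal_density) simp

lemma borel_measurable_lipschitz: "L-lipschitz_on UNIV f \<Longrightarrow> (f :: real \<Rightarrow> real) \<in> borel_measurable borel"
  by (rule borel_measurable_continuous_onI, rule lipschitz_on_continuous_on)

text \<open>Domination by a Gaussian density of variance 2, via \<open>c \<bar>z\<bar> \<le> c\<^sup>2 + z\<^sup>2 / 4\<close>.\<close>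
lemma integrable_std_gauss_exp_lipschitz:
  fixes \<phi> :: "real \<Rightarrow> real"
  assumes lip: "L-lipschitz_on UNIV \<phi>"
  shows "integrable std_gauss (\<lambda>z. exp (\<beta> * \<phi> z))"
proof -
  have [measurable]: "\<phi> \<in> borel_measurable borel" by (rule borel_measurable_lipschitz[OF lip])
  define c where "c = \<bar>\<beta>\<bar> * L"
  define K where "K = 2 * exp (\<bar>\<beta>\<bar> * \<bar>\<phi> 0\<bar> + c\<^sup>2)"
  have bound: "std_normal_density z * exp (\<beta> * \<phi> z) \<le> K * normal_density 0 (sqrt 2) z" for z
  proof -
    have "\<bar>\<phi> z - \<phi> 0\<bar> \<le> L * \<bar>z\<bar>"
      using lipschitz_onD[OF lip, of z 0] by (simp add: dist_real_def)
    then have "\<bar>\<phi> z\<bar> \<le> \<bar>\<phi> 0\<bar> + L * \<bar>z\<bar>" by linarith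
    then have "\<beta> * \<phi> z \<le> \<bar>\<beta>\<bar> * (\<bar>\<phi> 0\<bar> + L * \<bar>z\<bar>)"
      by (metis abs_ge_self abs_ge_zero abs_mult mult_left_mono order_trans)
    then have "\<beta> * \<phi> z \<le> \<bar>\<beta>\<bar> * \<bar>\<phi> 0\<bar> + c * \<bar>z\<bar>"
      unfolding c_def by (simp add: algebra_simps)
    moreover have "c * \<bar>z\<bar> \<le> c\<^sup>2 + z\<^sup>2 / 4"
      using zero_le_power2[of "c - \<bar>z\<bar> / 2"] by (simp add: power2_eq_square algebra_simps)
    ultimately have "- z\<^sup>2 / 2 + \<beta> * \<phi> z \<le> (\<bar>\<beta>\<bar> * \<bar>\<phi> 0\<bar> + c\<^sup>2) + (- z\<^sup>2 / 4)"
      by linarith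
    then have "std_normal_density z * exp (\<beta> * \<phi> z)
        \<le> exp (\<bar>\<beta>\<bar> * \<bar>\<phi> 0\<bar> + c\<^sup>2) * exp (- z\<^sup>2 / 4) / sqrt (2 * pi)"
      by (simp add: std_normal_density_def divide_right_mono flip: exp_add)
    also have "\<dots> = K * normal_density 0 (sqrt 2) z / sqrt 2"
      by (simp add: K_def normal_density_def real_sqrt_mult field_simps)
    also have "\<dots> \<le> K * normal_density 0 (sqrt 2) z"
    proof -
      have "0 \<le> K * normal_density 0 (sqrt 2) z" by (simp add: K_def)
      then show ?thesis
        by (simp add: divide_le_eq mult_le_cancel_left1 mult_le_cancel_right1 order_trans)
    qed
    finally show ?thesis .
  qed
  have "integrable lborel (\<lambda>z. std_normal_density z *\<^sub>R exp (\<beta> * \<phi> z))"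
    by (rule Bochner_Integration.integrable_bound[of _ "\<lambda>z. K * normal_density 0 (sqrt 2) z"])
      (use bound in \<open>auto simp: K_def\<close>)
  then show ?thesis unfolding std_gauss_def
    by (subst integrable_density) auto
qed

lemma mgf_pos:
  assumes "L-lipschitz_on UNIV \<phi>"
  shows "mgf \<phi> \<beta> > 0"
proof -
  interpret prob_space std_gauss by (rule prob_space_std_gauss)
  have [measurable]: "\<phi> \<in> borel_measurable borel" by (rule borel_measurable_lipschitz[OF assms])
  have int: "integrable std_gauss (\<lambda>z. exp (\<beta> * \<phi> z))"
    by (rule integrable_std_gauss_exp_lipschitz[OF assms])
  have "(\<integral>z. exp (\<beta> * \<phi> z) \<partial>std_gauss) \<noteq> 0"
  proof
    assume "(\<integral>z. exp (\<beta> * \<phi> z) \<partial>std_gauss) = 0"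
    then have "AE z in std_gauss. exp (\<beta> * \<phi> z) = 0"
      using integral_nonneg_eq_0_iff_AE[OF int] by simp
    then show False using AE_False emeasure_space_1 by simp
  qed
  moreover have "0 \<le> (\<integral>z. exp (\<beta> * \<phi> z) \<partial>std_gauss)" by (intro integral_nonneg_AE) simp
  ultimately show ?thesis unfolding mgf_def by linarith
qed

lemma iid_field_prob_space: "iid_field M \<phi> \<xi> \<Longrightarrow> prob_space M"
  unfolding iid_field_def by simp

lemma iid_field_indep_vars:
  "iid_field M \<phi> \<xi> \<Longrightarrow> prob_space.indep_vars M (\<lambda>_. borel) (\<lambda>(u, y). \<xi> u y) ({1..} \<times> UNIV)"
  unfolding iid_field_def by simp

lemma iid_field_distr: "iid_field M \<phi> \<xi> \<Longrightarrow> 1 \<le> u \<Longrightarrow> distr M borel (\<xi> u y) = distr std_gauss borel \<phi>"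
  unfolding iid_field_def by simp

lemma iid_field_measurable:
  assumes "iid_field M \<phi> \<xi>" "1 \<le> u"
  shows "\<xi> u y \<in> borel_measurable M"
proof -
  interpret prob_space M by (rule iid_field_prob_space[OF assms(1)])
  show ?thesis using iid_field_indep_vars[OF assms(1)] assms(2) unfolding indep_vars_def by auto
qed

lemma has_bochner_integral_exp_xi:
  assumes iid: "iid_field M \<phi> \<xi>" and lip: "L-lipschitz_on UNIV \<phi>" and "1 \<le> u"
  shows "has_bochner_integral M (\<lambda>\<omega>. exp (\<beta> * \<xi> u y \<omega>)) (mgf \<phi> \<beta>)"
proof -
  have \<xi>_meas: "\<xi> u y \<in> borel_measurable M" by (rule iid_field_measurable[OF iid assms(3)])
  have \<phi>_meas: "\<phi> \<in> measurable std_gauss borel"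
    by (subst measurable_cong_sets[OF sets_std_gauss refl]) (rule borel_measurable_lipschitz[OF lip])
  have exp_meas: "(\<lambda>z::real. exp (\<beta> * z)) \<in> borel_measurable borel" by measurable
  note distr = iid_field_distr[OF iid assms(3), of y]
  have "integrable M (\<lambda>\<omega>. exp (\<beta> * \<xi> u y \<omega>))"
    using integrable_std_gauss_exp_lipschitz[OF lip]
    by (simp add: integrable_distr_eq[OF \<xi>_meas exp_meas, symmetric] distr integrable_distr_eq[OF \<phi>_meas exp_meas])
  moreover have "(\<integral>\<omega>. exp (\<beta> * \<xi> u y \<omega>) \<partial>M) = mgf \<phi> \<beta>"
    unfolding mgf_def
    by (simp add: integral_distr[OF \<xi>_meas exp_meas, symmetric] distr integral_distr[OF \<phi>_meas exp_meas])
  ultimately show ?thesis by (simp add: has_bochner_integral_iff)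
qed

lemma has_bochner_integral_exp_path_sum:
  fixes p :: "nat \<Rightarrow> int^'d"
  assumes iid: "iid_field M \<phi> \<xi>" and lip: "L-lipschitz_on UNIV \<phi>"
  shows "has_bochner_integral M (\<lambda>\<omega>. exp (\<beta> * (\<Sum>i\<in>{1..s}. \<xi> i (p i) \<omega>))) (mgf \<phi> \<beta> ^ s)"
proof -
  interpret prob_space M by (rule iid_field_prob_space[OF iid])
  define X where "X = (\<lambda>j \<omega>. exp (\<beta> * (\<lambda>(u, y). \<xi> u y) j \<omega>))"
  define J where "J = (\<lambda>i. (i, p i)) ` {1..s}"
  have inj: "inj_on (\<lambda>i. (i, p i)) {1..s}" by (auto intro: inj_onI)
  have "indep_vars (\<lambda>_. borel) X ({1..} \<times> UNIV)"
    unfolding X_def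
    by (rule indep_vars_compose2[OF iid_field_indep_vars[OF iid], where Y="\<lambda>_ z. exp (\<beta> * z)"]) measurable
  then have indep: "indep_vars (\<lambda>_. borel) X J"
    by (rule indep_vars_subset) (auto simp: J_def)
  have "has_bochner_integral M (X j) (mgf \<phi> \<beta>)" if "j \<in> J" for j
    using that has_bochner_integral_exp_xi[OF iid lip] unfolding J_def X_def by auto
  then have int_X: "integrable M (X j)" and integral_X: "(\<integral>\<omega>. X j \<omega> \<partial>M) = mgf \<phi> \<beta>" if "j \<in> J" for j
    using that by (auto simp: has_bochner_integral_iff)
  have fin: "finite J" by (simp add: J_def)
  have "(\<lambda>\<omega>. exp (\<beta> * (\<Sum>i\<in>{1..s}. \<xi> i (p i) \<omega>))) = (\<lambda>\<omega>. \<Prod>j\<in>J. X j \<omega>)"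
    unfolding J_def X_def by (subst prod.reindex[OF inj]) (simp add: sum_distrib_left exp_sum)
  moreover have "integrable M (\<lambda>\<omega>. \<Prod>j\<in>J. X j \<omega>)"
    by (rule indep_vars_integrable[OF fin indep int_X])
  moreover have "(\<integral>\<omega>. (\<Prod>j\<in>J. X j \<omega>) \<partial>M) = mgf \<phi> \<beta> ^ s"
    using indep_vars_lebesgue_integral[OF fin indep int_X] card_image[OF inj]
    by (simp add: integral_X J_def)
  ultimately show ?thesis by (simp add: has_bochner_integral_iff)
qed

lemma sets_Fsig:
  "sets (Fsig M \<xi> a b)
    = sigma_sets (space M) {\<xi> u y -` A \<inter> space M | u y A. Suc a \<le> u \<and> u \<le> b \<and> A \<in> sets borel}"
  unfolding Fsig_def by (rule sets_measure_of) auto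

lemma space_Fsig [simp]: "space (Fsig M \<xi> a b) = space M"
  unfolding Fsig_def by (simp add: space_measure_of_conv)

lemma measurable_Fsig_xi: "Suc a \<le> u \<Longrightarrow> u \<le> b \<Longrightarrow> \<xi> u y \<in> borel_measurable (Fsig M \<xi> a b)"
  by (rule measurableI) (auto simp: sets_Fsig intro!: sigma_sets.Basic)

lemma subalgebra_Fsig: "iid_field M \<phi> \<xi> \<Longrightarrow> subalgebra M (Fsig M \<xi> a b)"
  unfolding subalgebra_def sets_Fsig
  by (auto intro!: sets.sigma_sets_subset measurable_sets[OF iid_field_measurable])

lemma indep_set_Fsig:
  fixes \<xi> :: "nat \<Rightarrow> int^'d \<Rightarrow> 'a \<Rightarrow> real"
  assumes iid: "iid_field M \<phi> \<xi>" and "s \<le> t"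
  shows "prob_space.indep_set M (sets (Fsig M \<xi> 0 s)) (sets (Fsig M \<xi> s t))"
proof -
  interpret prob_space M by (rule iid_field_prob_space[OF iid])
  define E where "E = (\<lambda>i. {(\<lambda>(u, y). \<xi> u y) i -` A \<inter> space M | A. A \<in> sets (borel :: real measure)})"
  define I where "I = (\<lambda>j::bool. if j then {1..s} \<times> (UNIV :: (int^'d) set) else {Suc s..t} \<times> UNIV)"
  have "indep_sets E ({1..} \<times> UNIV)"
    using iid_field_indep_vars[OF iid] unfolding indep_vars_def2 E_def by simp
  then have "indep_sets E (\<Union>j. I j)"
    by (rule indep_sets_mono_index[rotated]) (auto simp: I_def)
  then have collected: "indep_sets (\<lambda>j. sigma_sets (space M) (\<Union>i\<in>I j. E i)) UNIV"
  proof (rule indep_sets_collect_sigma)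
    show "Int_stable (E i)" for i
      unfolding Int_stable_def
    proof clarify
      fix a b assume "a \<in> E i" "b \<in> E i"
      then obtain A B where "A \<in> sets borel" "B \<in> sets borel"
        "a = (\<lambda>(u, y). \<xi> u y) i -` A \<inter> space M" "b = (\<lambda>(u, y). \<xi> u y) i -` B \<inter> space M"
        unfolding E_def by blast
      then show "a \<inter> b \<in> E i"
        unfolding E_def by (intro CollectI exI[of _ "A \<inter> B"]) auto
    qed
    show "disjoint_family_on I UNIV"
      unfolding disjoint_family_on_def I_def by auto
  qed
  have generators: "(\<Union>i\<in>I True. E i) = {\<xi> u y -` A \<inter> space M | u y A. Suc 0 \<le> u \<and> u \<le> s \<and> A \<in> sets borel}"
    "(\<Union>i\<in>I False. E i) = {\<xi> u y -` A \<inter> space M | u y A. Suc s \<le> u \<and> u \<le> t \<and> A \<in> sets borel}"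
    unfolding I_def E_def by auto (blast intro: atLeastAtMost_iff[THEN iffD2])+
  show ?thesis
    unfolding indep_set_def using collected
  proof (rule indep_sets_mono_sets)
    show "case_bool (sets (Fsig M \<xi> 0 s)) (sets (Fsig M \<xi> s t)) j \<subseteq> sigma_sets (space M) (\<Union>i\<in>I j. E i)" for j
      by (cases j) (simp_all only: generators sets_Fsig bool.case One_nat_def subset_refl)
  qed
qed

section \<open>Conditioning on the environment after time \<open>s\<close>\<close>

lemma (in prob_space) indep_set_integral_mult:
  fixes X Y :: "'a \<Rightarrow> real"
  assumes indep: "indep_set (sets F) (sets G)" and subF: "subalgebra M F" and subG: "subalgebra M G"
    and X: "X \<in> borel_measurable F" "integrable M X" and Y: "Y \<in> borel_measurable G" "integrable M Y"
  shows "integrable M (\<lambda>\<omega>. X \<omega> * Y \<omega>)" and "(\<integral>\<omega>. X \<omega> * Y \<omega> \<partial>M) = expectation X * expectation Y"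
proof -
  have generated: "sigma_sets (space M) {Z -` A \<inter> space M | A. A \<in> sets borel} \<subseteq> sets N"
    if "subalgebra M N" "Z \<in> borel_measurable N" for Z :: "'a \<Rightarrow> real" and N
  proof -
    have "space N = space M" using that(1) by (simp add: subalgebra_def)
    with that(2) have "{Z -` A \<inter> space M | A. A \<in> sets borel} \<subseteq> sets N"
      by (auto simp: measurable_def)
    from sets.sigma_sets_subset[OF this] \<open>space N = space M\<close> show ?thesis by simp
  qed
  have "indep_var borel X borel Y"
    unfolding indep_var_eq
  proof (intro conjI)
    show "random_variable borel X" by (rule measurable_from_subalg[OF subF X(1)])
    show "random_variable borel Y" by (rule measurable_from_subalg[OF subG Y(1)])
    show "indep_set (sigma_sets (space M) {X -` A \<inter> space M |A. A \<in> sets borel})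
                    (sigma_sets (space M) {Y -` A \<inter> space M |A. A \<in> sets borel})"
      using indep unfolding indep_set_def
      by (rule indep_sets_mono_sets)
        (use generated[OF subF X(1)] generated[OF subG Y(1)] in \<open>auto split: bool.split\<close>)
  qed
  then show "integrable M (\<lambda>\<omega>. X \<omega> * Y \<omega>)" "(\<integral>\<omega>. X \<omega> * Y \<omega> \<partial>M) = expectation X * expectation Y"
    using indep_var_integrable indep_var_lebesgue_integral X(2) Y(2) by blast+
qed

lemma (in prob_space) set_integral_mult_indep:
  fixes X Y :: "'a \<Rightarrow> real"
  assumes indep: "indep_set (sets G) (sets F)" and subF: "subalgebra M F" and subG: "subalgebra M G"
    and X: "X \<in> borel_measurable F" "integrable M X" and Y: "Y \<in> borel_measurable G" "integrable M Y"
    and A: "A \<in> sets F"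
  shows "(\<integral>\<omega>\<in>A. X \<omega> * Y \<omega> \<partial>M) = (\<integral>\<omega>\<in>A. X \<omega> * expectation Y \<partial>M)"
proof -
  have "(\<lambda>\<omega>. indicator A \<omega> * X \<omega>) \<in> borel_measurable F"
    using A X(1) by measurable
  moreover have "integrable M (\<lambda>\<omega>. indicator A \<omega> * X \<omega>)"
    using A subF integrable_mult_indicator[OF _ X(2)] by (auto simp: subalgebra_def)
  ultimately have "(\<integral>\<omega>. Y \<omega> * (indicator A \<omega> * X \<omega>) \<partial>M) = expectation Y * (\<integral>\<omega>. indicator A \<omega> * X \<omega> \<partial>M)"
    by (rule indep_set_integral_mult(2)[OF indep subG subF Y])
  moreover have "(\<integral>\<omega>. indicator A \<omega> * X \<omega> * expectation Y \<partial>M) = (\<integral>\<omega>. indicator A \<omega> * X \<omega> \<partial>M) * expectation Y"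
    by simp
  ultimately show ?thesis
    unfolding set_lebesgue_integral_def by (simp add: mult_ac)
qed

lemma (in prob_space) real_cond_exp_sum_mult_indep:
  fixes X Y :: "'i \<Rightarrow> 'a \<Rightarrow> real"
  assumes indep: "indep_set (sets G) (sets F)" and subF: "subalgebra M F" and subG: "subalgebra M G"
    and "finite I"
    and X: "\<And>i. i \<in> I \<Longrightarrow> X i \<in> borel_measurable F" "\<And>i. i \<in> I \<Longrightarrow> integrable M (X i)"
    and Y: "\<And>i. i \<in> I \<Longrightarrow> Y i \<in> borel_measurable G" "\<And>i. i \<in> I \<Longrightarrow> integrable M (Y i)"
  shows "AE \<omega> in M. real_cond_exp M F (\<lambda>\<omega>. \<Sum>i\<in>I. X i \<omega> * Y i \<omega>) \<omega> = (\<Sum>i\<in>I. X i \<omega> * expectation (Y i))"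
proof -
  have "finite_measure_subalgebra M F"
    unfolding finite_measure_subalgebra_def finite_measure_subalgebra_axioms_def
    using subF finite_measure_axioms by simp
  then interpret sigma_finite_subalgebra M F
    by (rule finite_measure_subalgebra_is_sigma_finite)
  have XY: "integrable M (\<lambda>\<omega>. X i \<omega> * Y i \<omega>)" if "i \<in> I" for i
    using indep_set_integral_mult(1)[OF indep subG subF Y(1,2)[OF that] X(1,2)[OF that]]
    by (simp add: mult.commute)
  show ?thesis
  proof (rule real_cond_exp_charact)
    fix A assume A: "A \<in> sets F"
    then have "A \<in> sets M" using subF by (auto simp: subalgebra_def)
    have "(\<integral>\<omega>\<in>A. (\<Sum>i\<in>I. X i \<omega> * Y i \<omega>) \<partial>M) = (\<Sum>i\<in>I. \<integral>\<omega>\<in>A. X i \<omega> * Y i \<omega> \<partial>M)"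
      unfolding set_lebesgue_integral_def using integrable_mult_indicator[OF \<open>A \<in> sets M\<close> XY]
      by (subst Bochner_Integration.integral_sum[symmetric]) (auto simp: sum_distrib_left)
    also have "\<dots> = (\<Sum>i\<in>I. \<integral>\<omega>\<in>A. X i \<omega> * expectation (Y i) \<partial>M)"
      using set_integral_mult_indep[OF indep subF subG X(1,2) Y(1,2) A] by simp
    also have "\<dots> = (\<Sum>i\<in>I. \<integral>\<omega>. indicator A \<omega> * X i \<omega> * expectation (Y i) \<partial>M)"
      unfolding set_lebesgue_integral_def by (simp add: mult.assoc)
    also have "\<dots> = (\<integral>\<omega>. (\<Sum>i\<in>I. indicator A \<omega> * X i \<omega> * expectation (Y i)) \<partial>M)"
      using integrable_mult_indicator[OF \<open>A \<in> sets M\<close> X(2)]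
      by (intro Bochner_Integration.integral_sum[symmetric] Bochner_Integration.integrable_mult_left) auto
    also have "\<dots> = (\<integral>\<omega>\<in>A. (\<Sum>i\<in>I. X i \<omega> * expectation (Y i)) \<partial>M)"
      unfolding set_lebesgue_integral_def by (simp add: sum_distrib_left mult.assoc)
    finally show "(\<integral>\<omega>\<in>A. (\<Sum>i\<in>I. X i \<omega> * Y i \<omega>) \<partial>M) = (\<integral>\<omega>\<in>A. (\<Sum>i\<in>I. X i \<omega> * expectation (Y i)) \<partial>M)" .
  next
    show "integrable M (\<lambda>\<omega>. \<Sum>i\<in>I. X i \<omega> * Y i \<omega>)"
      using XY by (rule Bochner_Integration.integrable_sum)
    show "integrable M (\<lambda>\<omega>. \<Sum>i\<in>I. X i \<omega> * expectation (Y i))"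
      using X(2) by auto
    show "(\<lambda>\<omega>. \<Sum>i\<in>I. X i \<omega> * expectation (Y i)) \<in> borel_measurable F"
      using X(1) by measurable
  qed
qed

lemma abs_sum_convex_diff_le:
  fixes a w :: "'i \<Rightarrow> real"
  assumes "\<And>i. i \<in> I \<Longrightarrow> 0 \<le> w i" "sum w I = 1" "\<And>i. i \<in> I \<Longrightarrow> \<bar>a i - c\<bar> \<le> B"
  shows "\<bar>(\<Sum>i\<in>I. w i * a i) - c\<bar> \<le> B"
proof -
  have "\<bar>(\<Sum>i\<in>I. w i * a i) - c\<bar> = \<bar>\<Sum>i\<in>I. w i * (a i - c)\<bar>"
    using assms(2) by (simp add: right_diff_distrib sum_subtractf flip: sum_distrib_right)
  also have "\<dots> \<le> (\<Sum>i\<in>I. w i * B)"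
    using assms by (intro order_trans[OF sum_abs sum_mono]) (simp add: abs_mult mult_left_mono)
  also have "\<dots> = B" using assms(2) by (simp flip: sum_distrib_right)
  finally show ?thesis .
qed

section \<open>The polymer decomposition of \<open>W\<close>\<close>

definition boltzmann_weight :: "real \<Rightarrow> (nat \<Rightarrow> int^'d \<Rightarrow> 'a \<Rightarrow> real) \<Rightarrow> nat \<Rightarrow> nat
    \<Rightarrow> (nat \<Rightarrow> int^'d) \<Rightarrow> 'a \<Rightarrow> real" where
  "boltzmann_weight \<beta> \<xi> s t r \<omega> = exp (\<beta> * (\<Sum>i\<in>{Suc s..t}. \<xi> i (r i) \<omega>))"

definition polymer_measure :: "real \<Rightarrow> (nat \<Rightarrow> int^'d \<Rightarrow> 'a \<Rightarrow> real) \<Rightarrow> nat \<Rightarrow> nat \<Rightarrow> int^'d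
    \<Rightarrow> (nat \<Rightarrow> int^'d) \<Rightarrow> 'a \<Rightarrow> real" where
  "polymer_measure \<beta> \<xi> s t x r \<omega> =
     boltzmann_weight \<beta> \<xi> s t r \<omega> / (\<Sum>q\<in>paths s t x. boltzmann_weight \<beta> \<xi> s t q \<omega>)"

lemma polymer_measure_nonneg: "0 \<le> polymer_measure \<beta> \<xi> s t x r \<omega>"
  unfolding polymer_measure_def boltzmann_weight_def by (simp add: sum_nonneg)

lemma sum_polymer_measure:
  "s \<le> t \<Longrightarrow> (\<Sum>r\<in>paths s t (x::int^'d::finite). polymer_measure \<beta> \<xi> s t x r \<omega>) = 1"
proof -
  assume "s \<le> t"
  then have "0 < (\<Sum>r\<in>paths s t x. boltzmann_weight \<beta> \<xi> s t r \<omega>)"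
    by (intro sum_pos finite_paths paths_nonempty) (auto simp: boltzmann_weight_def)
  then show ?thesis unfolding polymer_measure_def by (simp flip: sum_divide_distrib)
qed

lemma borel_measurable_boltzmann_weight:
  "boltzmann_weight \<beta> \<xi> a b r \<in> borel_measurable (Fsig M \<xi> a b)"
proof -
  have "(\<lambda>\<omega>. \<Sum>i\<in>{Suc a..b}. \<xi> i (r i) \<omega>) \<in> borel_measurable (Fsig M \<xi> a b)"
    by (intro borel_measurable_sum measurable_Fsig_xi) auto
  then show ?thesis unfolding boltzmann_weight_def[abs_def] by measurable
qed

lemma borel_measurable_polymer_measure:
  "polymer_measure \<beta> \<xi> s t x r \<in> borel_measurable (Fsig M \<xi> s t)"
  unfolding polymer_measure_def[abs_def]
  using borel_measurable_boltzmann_weight by measurable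

lemma borel_measurable_Zfun: "Zfun \<phi> \<beta> g \<epsilon> \<xi> s y \<in> borel_measurable (Fsig M \<xi> 0 s)"
proof -
  have "(\<lambda>\<omega>. exp (\<beta> * (\<Sum>i\<in>{1..s}. \<xi> i (q i) \<omega>))) \<in> borel_measurable (Fsig M \<xi> 0 s)" for q
    using borel_measurable_boltzmann_weight[of \<beta> \<xi> 0 s q M]
    unfolding boltzmann_weight_def[abs_def] One_nat_def .
  then show ?thesis
    unfolding Zfun_def[abs_def]
    by (intro borel_measurable_divide borel_measurable_sum borel_measurable_times) auto
qed

lemma Zfun_split:
  fixes x :: "int^'d::finite"
  assumes "s \<le> t"
  shows "Zfun \<phi> \<beta> g \<epsilon> \<xi> t x \<omega> =
    (\<Sum>r\<in>paths s t x. boltzmann_weight \<beta> \<xi> s t r \<omega> * Zfun \<phi> \<beta> g \<epsilon> \<xi> s (r s) \<omega>)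
      / ((2 * real CARD('d)) ^ (t - s) * mgf \<phi> \<beta> ^ (t - s))"
proof -
  obtain k where t: "t = s + k" using assms le_iff_add by blast
  show ?thesis
    unfolding Zfun_def boltzmann_weight_def
    using sum_paths_split[OF assms, of "\<lambda>v. exp (\<beta> * g (\<epsilon> *\<^sub>R rvec v))" \<beta> "\<lambda>i y. \<xi> i y \<omega>" x]
    by (simp add: t power_add mult_ac times_divide_eq_right flip: sum_divide_distrib)
qed

lemma Wfun_eq_sum_polymer_measure:
  fixes x :: "int^'d::finite"
  assumes "mgf \<phi> \<beta> \<noteq> 0" "s \<le> t"
  shows "Wfun \<phi> \<beta> g \<epsilon> \<xi> s t x =
    (\<lambda>\<omega>. \<Sum>r\<in>paths s t x. polymer_measure \<beta> \<xi> s t x r \<omega> * Zfun \<phi> \<beta> g \<epsilon> \<xi> s (r s) \<omega>)"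
proof
  fix \<omega>
  define Q where "Q = (2 * real CARD('d)) ^ (t - s) * mgf \<phi> \<beta> ^ (t - s)"
  have "Q \<noteq> 0" using assms(1) by (simp add: Q_def)
  moreover have "Yfun \<phi> \<beta> \<xi> s t x \<omega> = (\<Sum>r\<in>paths s t x. boltzmann_weight \<beta> \<xi> s t r \<omega>) / Q"
    unfolding Yfun_def boltzmann_weight_def Q_def ..
  ultimately have "Wfun \<phi> \<beta> g \<epsilon> \<xi> s t x \<omega>
      = (\<Sum>r\<in>paths s t x. boltzmann_weight \<beta> \<xi> s t r \<omega> * Zfun \<phi> \<beta> g \<epsilon> \<xi> s (r s) \<omega>)
        / (\<Sum>r\<in>paths s t x. boltzmann_weight \<beta> \<xi> s t r \<omega>)"
    unfolding Wfun_def Zfun_split[OF assms(2)] Q_def[symmetric] by simp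
  then show "Wfun \<phi> \<beta> g \<epsilon> \<xi> s t x \<omega>
      = (\<Sum>r\<in>paths s t x. polymer_measure \<beta> \<xi> s t x r \<omega> * Zfun \<phi> \<beta> g \<epsilon> \<xi> s (r s) \<omega>)"
    unfolding polymer_measure_def by (simp add: sum_divide_distrib)
qed

lemma has_bochner_integral_Zfun:
  fixes y :: "int^'d::finite"
  assumes iid: "iid_field M \<phi> \<xi>" and lip: "L-lipschitz_on UNIV \<phi>"
  shows "has_bochner_integral M (Zfun \<phi> \<beta> g \<epsilon> \<xi> s y) (Gfun \<beta> g \<epsilon> s y)"
proof -
  have "has_bochner_integral M (Zfun \<phi> \<beta> g \<epsilon> \<xi> s y)
      ((\<Sum>p\<in>paths 0 s y. exp (\<beta> * g (\<epsilon> *\<^sub>R rvec (p 0))) * mgf \<phi> \<beta> ^ s) / ((2 * real CARD('d)) ^ s * mgf \<phi> \<beta> ^ s))"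
    unfolding Zfun_def[abs_def]
    by (intro has_bochner_integral_divide_zero has_bochner_integral_sum has_bochner_integral_mult_right
        has_bochner_integral_exp_path_sum[OF iid lip])
  moreover have "(\<Sum>p\<in>paths 0 s y. exp (\<beta> * g (\<epsilon> *\<^sub>R rvec (p 0))) * mgf \<phi> \<beta> ^ s)
      / ((2 * real CARD('d)) ^ s * mgf \<phi> \<beta> ^ s) = Gfun \<beta> g \<epsilon> s y"
    unfolding Gfun_def using mgf_pos[OF lip, of \<beta>]
    by (simp add: sum_paths_start[of "\<lambda>v. exp (\<beta> * g (\<epsilon> *\<^sub>R rvec v))"] flip: sum_distrib_right)
  ultimately show ?thesis by simp
qed

lemma AE_real_cond_exp_Wfun:
  fixes \<xi> :: "nat \<Rightarrow> int^'d::finite \<Rightarrow> 'a \<Rightarrow> real"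
  assumes iid: "iid_field M \<phi> \<xi>" and lip: "L-lipschitz_on UNIV \<phi>" and "s \<le> t"
  shows "AE \<omega> in M. real_cond_exp M (Fsig M \<xi> s t) (Wfun \<phi> \<beta> g \<epsilon> \<xi> s t x) \<omega>
    = (\<Sum>r\<in>paths s t x. polymer_measure \<beta> \<xi> s t x r \<omega> * Gfun \<beta> g \<epsilon> s (r s))"
proof -
  interpret prob_space M by (rule iid_field_prob_space[OF iid])
  have "integrable M (polymer_measure \<beta> \<xi> s t x r)" if "r \<in> paths s t x" for r
  proof (rule integrable_const_bound[where B=1])
    show "AE \<omega> in M. norm (polymer_measure \<beta> \<xi> s t x r \<omega>) \<le> 1"
      using member_le_sum[OF that, of "\<lambda>r. polymer_measure \<beta> \<xi> s t x r _"]
      by (simp add: polymer_measure_nonneg sum_polymer_measure finite_paths assms(3))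
    show "polymer_measure \<beta> \<xi> s t x r \<in> borel_measurable M"
      by (rule measurable_from_subalg[OF subalgebra_Fsig[OF iid] borel_measurable_polymer_measure])
  qed
  then have "AE \<omega> in M. real_cond_exp M (Fsig M \<xi> s t)
      (\<lambda>\<omega>. \<Sum>r\<in>paths s t x. polymer_measure \<beta> \<xi> s t x r \<omega> * Zfun \<phi> \<beta> g \<epsilon> \<xi> s (r s) \<omega>) \<omega>
    = (\<Sum>r\<in>paths s t x. polymer_measure \<beta> \<xi> s t x r \<omega> * expectation (Zfun \<phi> \<beta> g \<epsilon> \<xi> s (r s)))"
    by (intro real_cond_exp_sum_mult_indep[OF indep_set_Fsig[OF iid assms(3)] subalgebra_Fsig[OF iid]
        subalgebra_Fsig[OF iid] finite_paths[OF assms(3)]])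
      (auto intro: borel_measurable_polymer_measure borel_measurable_Zfun
        integrable.intros[OF has_bochner_integral_Zfun[OF iid lip]])
  then show ?thesis
    unfolding Wfun_eq_sum_polymer_measure[OF mgf_pos[OF lip, THEN less_imp_neq, symmetric] assms(3)]
    by (simp add: has_bochner_integral_integral_eq[OF has_bochner_integral_Zfun[OF iid lip]])
qed

lemma AE_abs_real_cond_exp_Wfun_diff_le:
  fixes \<xi> :: "nat \<Rightarrow> int^'d::finite \<Rightarrow> 'a \<Rightarrow> real"
  assumes iid: "iid_field M \<phi> \<xi>" and lip: "L-lipschitz_on UNIV \<phi>" and "s \<le> t"
    and "\<And>r. r \<in> paths s t x \<Longrightarrow> \<bar>Gfun \<beta> g \<epsilon> s (r s) - Gfun \<beta> g \<epsilon> s x\<bar> \<le> B"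
  shows "AE \<omega> in M. \<bar>real_cond_exp M (Fsig M \<xi> s t) (Wfun \<phi> \<beta> g \<epsilon> \<xi> s t x) \<omega> - Gfun \<beta> g \<epsilon> s x\<bar> \<le> B"
  using AE_real_cond_exp_Wfun[OF iid lip assms(3), where \<beta>=\<beta> and g=g and \<epsilon>=\<epsilon> and x=x]
  by eventually_elim (simp add: abs_sum_convex_diff_le polymer_measure_nonneg sum_polymer_measure assms(3,4))

lemma Gfun_paths_start_diff_le:
  fixes g :: "real^'d::finite \<Rightarrow> real"
  assumes lip: "L-lipschitz_on UNIV g" and "0 \<le> \<beta>" "0 \<le> \<epsilon>" "s \<le> t" "r \<in> paths s t x"
  shows "\<bar>Gfun \<beta> g \<epsilon> s (r s) - Gfun \<beta> g \<epsilon> s x\<bar>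
    \<le> 2 * real CARD('d) * \<beta> * L * exp (\<beta> * \<bar>g 0\<bar>)
       * exp ((\<beta> * L + (real CARD('d) * \<beta> * L)\<^sup>2 / 2)
              * (\<epsilon> * norm (rvec x) + \<epsilon> * real (t - s) + \<epsilon> * sqrt (real t) + \<epsilon>\<^sup>2 * real t))
       * \<epsilon> * real (t - s)"
proof -
  define \<Sigma> where "\<Sigma> = \<epsilon> * norm (rvec x) + \<epsilon> * real (t - s) + \<epsilon> * sqrt (real t) + \<epsilon>\<^sup>2 * real t"
  have L: "0 \<le> L" using lipschitz_on_nonneg[OF lip] .
  have "0 \<le> \<epsilon> * norm (rvec x)" "0 \<le> \<epsilon> * real (t - s)" "0 \<le> \<epsilon> * sqrt (real t)"
    "\<epsilon>\<^sup>2 * real s \<le> \<epsilon>\<^sup>2 * real t"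
    using assms(3,4) by (auto intro: mult_left_mono)
  then have "\<epsilon> * (norm (rvec x) + real (t - s)) \<le> \<Sigma>" and "\<epsilon>\<^sup>2 * real s \<le> \<Sigma>"
    unfolding \<Sigma>_def distrib_left by (simp_all add: add_increasing2)
  then have "\<beta> * L * (\<epsilon> * (norm (rvec x) + real (t - s))) + (real CARD('d) * \<beta> * L)\<^sup>2 / 2 * (\<epsilon>\<^sup>2 * real s)
      \<le> (\<beta> * L + (real CARD('d) * \<beta> * L)\<^sup>2 / 2) * \<Sigma>"
    using assms(2) L by (simp add: distrib_right add_mono mult_left_mono)
  then have "exp (\<beta> * L * \<epsilon> * (norm (rvec x) + real (t - s)) + (real CARD('d) * \<beta> * L * \<epsilon>)\<^sup>2 * real s / 2)
      \<le> exp ((\<beta> * L + (real CARD('d) * \<beta> * L)\<^sup>2 / 2) * \<Sigma>)"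
    by (simp add: power_mult_distrib mult_ac)
  then show ?thesis
    using Gfun_diff_le[OF lip assms(2,3) norm_paths_start_le[OF assms(4,5)], of s] assms(2,3) L
    unfolding \<Sigma>_def[symmetric]
    by (elim order_trans) (intro mult_right_mono mult_left_mono; simp)
qed

theorem corollary7p3:
  fixes \<beta> :: real and \<phi> :: "real \<Rightarrow> real" and g :: "real^'d \<Rightarrow> real"
  assumes "CARD('d) \<ge> 3"
    and "\<beta> > 0"
    and "\<exists>L. L-lipschitz_on UNIV \<phi>"
    and "\<exists>L. L-lipschitz_on UNIV g"
    and "mu \<phi> \<beta> < 1 / rho TYPE('d)"
  shows "\<exists>C :: real \<Rightarrow> real. mono_on {0..} C \<and> continuous_on {0..} C \<and> (\<forall>r\<ge>0. C r > 0) \<and>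
    (\<forall>(M :: 'a measure) (\<xi> :: nat \<Rightarrow> int^'d \<Rightarrow> 'a \<Rightarrow> real). iid_field M \<phi> \<xi> \<longrightarrow>
      (\<forall>s t (x :: int^'d) \<epsilon>. 1 \<le> s \<and> s < t \<and> 0 < \<epsilon> \<and> \<epsilon> < 1 \<longrightarrow>
        (AE \<omega> in M.
          \<bar>real_cond_exp M (Fsig M \<xi> s t) (Wfun \<phi> \<beta> g \<epsilon> \<xi> s t x) \<omega> - Gfun \<beta> g \<epsilon> s x\<bar>
          \<le> C (\<epsilon> * norm (rvec x) + \<epsilon> * real (t - s) + \<epsilon> * sqrt (real t) + \<epsilon>\<^sup>2 * real t)
             * \<epsilon> * real (t - s))))"
proof -
  obtain L\<phi> where lip\<phi>: "L\<phi>-lipschitz_on UNIV \<phi>" using assms(3) by blast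
  obtain L0 where "L0-lipschitz_on UNIV g" using assms(4) by blast
  \<comment> \<open>Enlarging the constant to \<open>L0 + 1\<close> keeps \<open>C\<close> positive when \<open>g\<close> is constant.\<close>
  then have lip: "(L0 + 1)-lipschitz_on UNIV g" and L: "0 < L0 + 1"
    using lipschitz_on_le lipschitz_on_nonneg by fastforce+
  define A where "A = 2 * real CARD('d) * \<beta> * (L0 + 1) * exp (\<beta> * \<bar>g 0\<bar>)"
  define E where "E = \<beta> * (L0 + 1) + (real CARD('d) * \<beta> * (L0 + 1))\<^sup>2 / 2"
  have "0 < A" "0 \<le> E" unfolding A_def E_def using assms(2) L by simp_all
  show ?thesis
  proof (intro exI[of _ "\<lambda>r. A * exp (E * r)"] conjI allI impI)
    show "mono_on {0..} (\<lambda>r. A * exp (E * r))"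
      using \<open>0 < A\<close> \<open>0 \<le> E\<close> by (intro mono_onI) (simp add: mult_left_mono)
    show "continuous_on {0..} (\<lambda>r. A * exp (E * r))" by (intro continuous_intros)
    show "0 < A * exp (E * r)" for r using \<open>0 < A\<close> by simp
  next
    fix M :: "'a measure" and \<xi> :: "nat \<Rightarrow> int^'d \<Rightarrow> 'a \<Rightarrow> real" and s t :: nat
      and x :: "int^'d" and \<epsilon> :: real
    assume "iid_field M \<phi> \<xi>" "1 \<le> s \<and> s < t \<and> 0 < \<epsilon> \<and> \<epsilon> < 1"
    then show "AE \<omega> in M. \<bar>real_cond_exp M (Fsig M \<xi> s t) (Wfun \<phi> \<beta> g \<epsilon> \<xi> s t x) \<omega> - Gfun \<beta> g \<epsilon> s x\<bar>
        \<le> A * exp (E * (\<epsilon> * norm (rvec x) + \<epsilon> * real (t - s) + \<epsilon> * sqrt (real t) + \<epsilon>\<^sup>2 * real t))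
           * \<epsilon> * real (t - s)"
      using assms(2) Gfun_paths_start_diff_le[OF lip]
      by (intro AE_abs_real_cond_exp_Wfun_diff_le[OF _ lip\<phi>]) (auto simp: A_def E_def)
  qed
qed

end
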